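(* A lattice $L$ is isomorphic to a lattice of equational theories if and only if $L$ is isomorphic to the congruence lattice of a finite dimensional clone algebra (of some type).
   Context: A lattice of equational theories is a lattice of the form $L(T)$: the set of all equational theories (of some fixed type) containing a given equational theory $T$, ordered by inclusion. A clone $\tau$-algebra is an algebra $\mathbf C=(C,\sigma^{\mathbf C}\ (\sigma\in\tau),q_n^{\mathbf C}\ (n\ge0),\mathsf e_i^{\mathbf C}\ (i\ge1))$ with $\mathsf e_i$ nullary, $q_n$ of arity $n+1$, satisfying: (C1) $q_n(\mathsf e_i,x_1,\dots,x_n)=x_i$ ($1\le i\le n$); (C2) $q_n(\mathsf e_j,x_1,\dots,x_n)=\mathsf e_j$ ($j>n$); (C3) $q_n(x,\mathsf e_1,\dots,\mathsf e_n)=x$; (C4) $q_k(x,y_1,\dots,y_k)=q_n(x,y_1,\dots,y_k,\mathsf e_{k+1},\dots,\mathsf e_n)$ ($n>k$); (C5) $q_n(q_n(x,\mathbf y),\mathbf z)=q_n(x,q_n(y_1,\mathbf z),\dots,q_n(y_n,\mathbf z))$ with $\mathbf y,\mathbf z$ of length $n$; (C6) $q_n(\sigma(x_1,\dots,x_k),\mathbf y)=\sigma(q_n(x_1,\mathbf y),\dots,q_n(x_k,\mathbf y))$ for $\sigma\in\tau$ of arity $k$. A clone algebra is a clone $\tau$-algebra for some type $\tau$. An element $a$ is independent of $\mathsf e_n$ if $q_n(a,\mathsf e_1,\dots,\mathsf e_{n-1},\mathsf e_{n+1})=a$; the clone algebra is finite dimensional if each element is dependent on only finitely many $\mathsf e_n$.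 *)

theory Defs
  imports Main
begin

datatype 'f trm = Var nat | Fn 'f "'f trm list"

fun wf_trm :: "'f set \<Rightarrow> ('f \<Rightarrow> nat) \<Rightarrow> 'f trm \<Rightarrow> bool" where
  "wf_trm F ar (Var i) = True"
| "wf_trm F ar (Fn f ts) = (f \<in> F \<and> length ts = ar f \<and> (\<forall>t\<in>set ts. wf_trm F ar t))"

fun subst :: "(nat \<Rightarrow> 'f trm) \<Rightarrow> 'f trm \<Rightarrow> 'f trm" where
  "subst s (Var i) = s i"
| "subst s (Fn f ts) = Fn f (map (subst s) ts)"

text \<open>An equational theory of type (F, ar): a set of identities between terms of that type
  closed under the rules of equational deduction (reflexivity, symmetry, transitivity,
  replacement/compatibility and substitution), i.e. a fully invariant congruence of the term algebra.\<close>

definition eq_theory :: "'f set \<Rightarrow> ('f \<Rightarrow> nat) \<Rightarrow> ('f trm \<times> 'f trm) set \<Rightarrow> bool" where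
  "eq_theory F ar E \<longleftrightarrow>
     E \<subseteq> {(t, u). wf_trm F ar t \<and> wf_trm F ar u}
   \<and> (\<forall>t. wf_trm F ar t \<longrightarrow> (t, t) \<in> E)
   \<and> (\<forall>t u. (t, u) \<in> E \<longrightarrow> (u, t) \<in> E)
   \<and> (\<forall>t u v. (t, u) \<in> E \<longrightarrow> (u, v) \<in> E \<longrightarrow> (t, v) \<in> E)
   \<and> (\<forall>f ts us. f \<in> F \<longrightarrow> length ts = ar f \<longrightarrow> length us = ar f \<longrightarrow>
        list_all2 (\<lambda>t u. (t, u) \<in> E) ts us \<longrightarrow> (Fn f ts, Fn f us) \<in> E)
   \<and> (\<forall>s t u. (\<forall>i. wf_trm F ar (s i)) \<longrightarrow> (t, u) \<in> E \<longrightarrow> (subst s t, subst s u) \<in> E)"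

definition eq_theory_lattice :: "'f set \<Rightarrow> ('f \<Rightarrow> nat) \<Rightarrow> ('f trm \<times> 'f trm) set
    \<Rightarrow> ('f trm \<times> 'f trm) set set" where
  "eq_theory_lattice F ar T = {E. eq_theory F ar E \<and> T \<subseteq> E}"

text \<open>A clone (G, ar)-algebra with carrier A: basic operations sg (for symbols in G),
  q n x [y1,...,yn] for q_n, and nullary constants e i (i \<ge> 1).\<close>

definition clone_algebra ::
  "'g set \<Rightarrow> ('g \<Rightarrow> nat) \<Rightarrow> 'c set \<Rightarrow> ('g \<Rightarrow> 'c list \<Rightarrow> 'c)
     \<Rightarrow> (nat \<Rightarrow> 'c \<Rightarrow> 'c list \<Rightarrow> 'c) \<Rightarrow> (nat \<Rightarrow> 'c) \<Rightarrow> bool" where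
  "clone_algebra G ar A sg q e \<longleftrightarrow>
     (\<forall>\<sigma> xs. \<sigma> \<in> G \<longrightarrow> length xs = ar \<sigma> \<longrightarrow> set xs \<subseteq> A \<longrightarrow> sg \<sigma> xs \<in> A)
   \<and> (\<forall>n x ys. x \<in> A \<longrightarrow> length ys = n \<longrightarrow> set ys \<subseteq> A \<longrightarrow> q n x ys \<in> A)
   \<and> (\<forall>i. i \<ge> 1 \<longrightarrow> e i \<in> A)
   \<comment> \<open>(C1)\<close>
   \<and> (\<forall>n i xs. 1 \<le> i \<longrightarrow> i \<le> n \<longrightarrow> length xs = n \<longrightarrow> set xs \<subseteq> A \<longrightarrow> q n (e i) xs = xs ! (i - 1))
   \<comment> \<open>(C2)\<close>
   \<and> (\<forall>n j xs. j > n \<longrightarrow> length xs = n \<longrightarrow> set xs \<subseteq> A \<longrightarrow> q n (e j) xs = e j)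
   \<comment> \<open>(C3)\<close>
   \<and> (\<forall>n x. x \<in> A \<longrightarrow> q n x (map e [1..<n+1]) = x)
   \<comment> \<open>(C4)\<close>
   \<and> (\<forall>n k x ys. n > k \<longrightarrow> x \<in> A \<longrightarrow> length ys = k \<longrightarrow> set ys \<subseteq> A \<longrightarrow>
        q k x ys = q n x (ys @ map e [k+1..<n+1]))
   \<comment> \<open>(C5)\<close>
   \<and> (\<forall>n x ys zs. x \<in> A \<longrightarrow> length ys = n \<longrightarrow> set ys \<subseteq> A \<longrightarrow> length zs = n \<longrightarrow> set zs \<subseteq> A \<longrightarrow>
        q n (q n x ys) zs = q n x (map (\<lambda>y. q n y zs) ys))
   \<comment> \<open>(C6)\<close>
   \<and> (\<forall>\<sigma> n xs ys. \<sigma> \<in> G \<longrightarrow> length xs = ar \<sigma> \<longrightarrow> set xs \<subseteq> A \<longrightarrow> length ys = n \<longrightarrow> set ys \<subseteq> A \<longrightarrow>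
        q n (sg \<sigma> xs) ys = sg \<sigma> (map (\<lambda>x. q n x ys) xs))"

definition independent :: "(nat \<Rightarrow> 'c \<Rightarrow> 'c list \<Rightarrow> 'c) \<Rightarrow> (nat \<Rightarrow> 'c) \<Rightarrow> 'c \<Rightarrow> nat \<Rightarrow> bool" where
  "independent q e a n \<longleftrightarrow> q n a (map e [1..<n] @ [e (n + 1)]) = a"

definition finite_dimensional :: "'c set \<Rightarrow> (nat \<Rightarrow> 'c \<Rightarrow> 'c list \<Rightarrow> 'c) \<Rightarrow> (nat \<Rightarrow> 'c) \<Rightarrow> bool" where
  "finite_dimensional A q e \<longleftrightarrow> (\<forall>a\<in>A. finite {n. n \<ge> 1 \<and> \<not> independent q e a n})"

text \<open>Congruences of a clone algebra: equivalence relations on the carrier compatible with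
  all operations (the nullary e_i impose no condition).\<close>

definition clone_congruence ::
  "'g set \<Rightarrow> ('g \<Rightarrow> nat) \<Rightarrow> 'c set \<Rightarrow> ('g \<Rightarrow> 'c list \<Rightarrow> 'c)
     \<Rightarrow> (nat \<Rightarrow> 'c \<Rightarrow> 'c list \<Rightarrow> 'c) \<Rightarrow> ('c \<times> 'c) set \<Rightarrow> bool" where
  "clone_congruence G ar A sg q R \<longleftrightarrow>
     equiv A R
   \<and> (\<forall>\<sigma> xs ys. \<sigma> \<in> G \<longrightarrow> length xs = ar \<sigma> \<longrightarrow> list_all2 (\<lambda>x y. (x, y) \<in> R) xs ys \<longrightarrow>
        (sg \<sigma> xs, sg \<sigma> ys) \<in> R)
   \<and> (\<forall>n x x' ys ys'. (x, x') \<in> R \<longrightarrow> length ys = n \<longrightarrow> list_all2 (\<lambda>y y'. (y, y') \<in> R) ys ys' \<longrightarrow>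
        (q n x ys, q n x' ys') \<in> R)"

definition congruence_lattice ::
  "'g set \<Rightarrow> ('g \<Rightarrow> nat) \<Rightarrow> 'c set \<Rightarrow> ('g \<Rightarrow> 'c list \<Rightarrow> 'c)
     \<Rightarrow> (nat \<Rightarrow> 'c \<Rightarrow> 'c list \<Rightarrow> 'c) \<Rightarrow> ('c \<times> 'c) set set" where
  "congruence_lattice G ar A sg q = {R. clone_congruence G ar A sg q R}"

text \<open>The lattice 'a (a type of class lattice) is isomorphic to the lattice (S, \<subseteq>):
  a bijection that preserves and reflects the order (for lattices this is exactly a
  lattice isomorphism).\<close>

definition iso_to_set_lattice :: "'a::lattice itself \<Rightarrow> 'b set set \<Rightarrow> bool" where
  "iso_to_set_lattice _ S \<longleftrightarrow>
     (\<exists>h :: 'a \<Rightarrow> 'b set. bij_betw h UNIV S \<and> (\<forall>x y. x \<le> y \<longleftrightarrow> h x \<subseteq> h y))"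

end

theory Submission
  imports Defs
begin

text \<open>
  Both directions rest on one correspondence. Suppose a map \<pi> sends the well-formed terms of a
  type onto the carrier of an algebra, turning each basic operation into the formation of a term
  and q_n(\<pi> t, \<pi> u_1, ..., \<pi> u_n) into \<pi> of the substitution instance t[u_1, ..., u_n]. Then
  the algebra is a finite dimensional clone algebra (\<pi> t depends only on the variables of t), and
  preimage and image under \<pi> are mutually inverse monotone bijections between its congruences
  and the equational theories containing the kernel of \<pi>.

  The term algebra modulo an equational theory T is such a presentation, with kernel T.
  Conversely, a finite dimensional clone algebra is presented by the terms over its basic
  operations together with one symbol of arity dim c for every element c, read as q_{dim c}(c, -).
  Evaluation commutes with substitution because c is independent of every e_n with n > dim c,
  which yields q_N(q_k(c, xs), ys) = q_k(c, q_N(x_1, ys), ..., q_N(x_k, ys)) for k = dim c.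
\<close>

fun vars :: "'f trm \<Rightarrow> nat set" where
  "vars (Var i) = {i}"
| "vars (Fn f ts) = (\<Union>t\<in>set ts. vars t)"

lemma finite_vars: "finite (vars t)"
  by (induction t) auto

lemma subst_cong: "(\<And>i. i \<in> vars t \<Longrightarrow> s i = s' i) \<Longrightarrow> subst s t = subst s' t"
  by (induction t) auto

lemma subst_Var [simp]: "subst Var t = t"
  by (induction t) (auto intro: map_idI)

lemma subst_subst: "subst s (subst r t) = subst (subst s \<circ> r) t"
  by (induction t) auto

lemma wf_trm_subst: "wf_trm F ar t \<Longrightarrow> (\<And>i. wf_trm F ar (s i)) \<Longrightarrow> wf_trm F ar (subst s t)"
  by (induction t) auto

definition subst_of :: "'f trm list \<Rightarrow> nat \<Rightarrow> 'f trm" where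
  "subst_of us i = (if i < length us then us ! i else Var i)"

lemma subst_of_Nil [simp]: "subst_of [] = Var"
  by (simp add: subst_of_def fun_eq_iff)

lemma wf_trm_subst_of: "(\<And>u. u \<in> set us \<Longrightarrow> wf_trm F ar u) \<Longrightarrow> wf_trm F ar (subst_of us i)"
  by (simp add: subst_of_def)

lemma subst_of_append_Vars: "length us = k \<Longrightarrow> subst_of (us @ map Var [k..<n]) = subst_of us"
  by (auto simp: subst_of_def fun_eq_iff nth_append)

lemma subst_of_Vars [simp]: "subst_of (map Var [0..<n]) = Var"
  using subst_of_append_Vars[of "[]" 0 n] by simp

lemma subst_subst_of:
  "length ws \<le> length us \<Longrightarrow>
    subst (subst_of ws) (subst (subst_of us) t) = subst (subst_of (map (subst (subst_of ws)) us)) t"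
  by (auto simp: subst_subst subst_of_def intro!: subst_cong)

lemma subst_eq_subst_of: "(\<And>i. i \<in> vars t \<Longrightarrow> i < N) \<Longrightarrow> subst s t = subst (subst_of (map s [0..<N])) t"
  by (auto simp: subst_of_def intro!: subst_cong)

lemma map_subst_of_upt: "map (subst_of us) [0..<length us] = us"
  by (rule nth_equalityI) (auto simp: subst_of_def)

lemma eq_theoryD:
  assumes "eq_theory F ar E"
  shows eq_theory_wf: "(t, u) \<in> E \<Longrightarrow> wf_trm F ar t \<and> wf_trm F ar u"
    and eq_theory_refl: "wf_trm F ar t \<Longrightarrow> (t, t) \<in> E"
    and eq_theory_sym: "(t, u) \<in> E \<Longrightarrow> (u, t) \<in> E"
    and eq_theory_trans: "(t, u) \<in> E \<Longrightarrow> (u, v) \<in> E \<Longrightarrow> (t, v) \<in> E"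
    and eq_theory_Fn: "f \<in> F \<Longrightarrow> length ts = ar f \<Longrightarrow> length us = ar f \<Longrightarrow>
        list_all2 (\<lambda>t u. (t, u) \<in> E) ts us \<Longrightarrow> (Fn f ts, Fn f us) \<in> E"
    and eq_theory_subst: "(\<And>i. wf_trm F ar (s i)) \<Longrightarrow> (t, u) \<in> E \<Longrightarrow> (subst s t, subst s u) \<in> E"
  using assms unfolding eq_theory_def by blast+

lemma eq_theory_equiv: "eq_theory F ar E \<Longrightarrow> equiv {t. wf_trm F ar t} E"
  by (rule equivI) (auto simp: refl_on_def sym_def trans_def dest: eq_theoryD)

lemma eq_theory_subst_args:
  assumes E: "eq_theory F ar E" and "wf_trm F ar t" and s: "\<And>i. (s i, s' i) \<in> E"
  shows "(subst s t, subst s' t) \<in> E"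
  using assms(2)
proof (induction t)
  case (Var i)
  then show ?case using s by simp
next
  case (Fn f ts)
  then have "list_all2 (\<lambda>t u. (t, u) \<in> E) (map (subst s) ts) (map (subst s') ts)"
    by (auto simp: list_all2_conv_all_nth)
  with Fn.prems show ?case by (auto intro: eq_theory_Fn[OF E])
qed

lemma eq_theory_subst_compat:
  assumes E: "eq_theory F ar E" and "(t, t') \<in> E" and s: "\<And>i. (s i, s' i) \<in> E"
  shows "(subst s t, subst s' t') \<in> E"
proof -
  have "(subst s t, subst s t') \<in> E"
    using assms by (blast intro: eq_theory_subst dest: eq_theory_wf)
  moreover have "(subst s t', subst s' t') \<in> E"
    using assms by (blast intro: eq_theory_subst_args dest: eq_theory_wf)
  ultimately show ?thesis by (rule eq_theory_trans[OF E])
qed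

lemma list_all2_set_Domain_Range:
  "list_all2 (\<lambda>x y. (x, y) \<in> R) xs ys \<Longrightarrow> set xs \<subseteq> Domain R \<and> set ys \<subseteq> Range R"
  by (induction rule: list_all2_induct) auto

lemma list_all2_Id_on: "list_all2 (\<lambda>x y. (x, y) \<in> Id_on A) xs ys \<longleftrightarrow> xs = ys \<and> set xs \<subseteq> A"
  by (induction xs arbitrary: ys) (auto simp: list_all2_Cons1)

lemma clone_congruenceD:
  assumes "clone_congruence G ar A sg q R"
  shows clone_congruence_eq_\<pi>_Varuiv: "equiv A R"
    and clone_congruence_q: "(x, x') \<in> R \<Longrightarrow> list_all2 (\<lambda>y y'. (y, y') \<in> R) ys ys' \<Longrightarrow>
        (q (length ys) x ys, q (length ys) x' ys') \<in> R"
  using assms unfolding clone_congruence_def by blast+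

lemma iso_to_set_lattice_transfer:
  assumes iso: "iso_to_set_lattice TYPE('a::lattice) S"
    and maps: "\<phi> ` S \<subseteq> S'" "\<psi> ` S' \<subseteq> S"
    and inverse: "\<And>x. x \<in> S \<Longrightarrow> \<psi> (\<phi> x) = x" "\<And>y. y \<in> S' \<Longrightarrow> \<phi> (\<psi> y) = y"
    and mono: "mono \<phi>" "mono \<psi>"
  shows "iso_to_set_lattice TYPE('a) S'"
proof -
  obtain h :: "'a \<Rightarrow> _" where h: "bij_betw h UNIV S" "\<And>x y. x \<le> y \<longleftrightarrow> h x \<subseteq> h y"
    using iso unfolding iso_to_set_lattice_def by blast
  have hS: "h x \<in> S" for x
    using h(1) bij_betwE by blast
  have "bij_betw \<phi> S S'"
    by (rule bij_betw_byWitness[where f' = \<psi>]) (use maps inverse in auto)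
  then have "bij_betw (\<phi> \<circ> h) UNIV S'"
    using h(1) bij_betw_trans by blast
  moreover have "x \<le> y \<longleftrightarrow> (\<phi> \<circ> h) x \<subseteq> (\<phi> \<circ> h) y" for x y
  proof
    assume "(\<phi> \<circ> h) x \<subseteq> (\<phi> \<circ> h) y"
    then have "\<psi> (\<phi> (h x)) \<subseteq> \<psi> (\<phi> (h y))"
      using mono(2) by (auto dest: monoD)
    then show "x \<le> y"
      using inverse(1) hS h(2) by simp
  qed (use h(2) mono(1) in \<open>auto dest: monoD\<close>)
  ultimately show ?thesis
    unfolding iso_to_set_lattice_def by blast
qed

locale term_presentation =
  fixes F :: "'f set" and ar :: "'f \<Rightarrow> nat"
    and G :: "'g set" and ar' :: "'g \<Rightarrow> nat" and \<iota> :: "'g \<Rightarrow> 'f"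
    and A :: "'c set" and sg :: "'g \<Rightarrow> 'c list \<Rightarrow> 'c"
    and q :: "nat \<Rightarrow> 'c \<Rightarrow> 'c list \<Rightarrow> 'c" and e :: "nat \<Rightarrow> 'c"
    and \<pi> :: "'f trm \<Rightarrow> 'c"
  assumes \<pi>_in: "wf_trm F ar t \<Longrightarrow> \<pi> t \<in> A"
    and \<pi>_onto: "a \<in> A \<Longrightarrow> \<exists>t. wf_trm F ar t \<and> \<pi> t = a"
    and \<pi>_Var: "\<pi> (Var i) = e (Suc i)" \<comment> \<open>variables are numbered from 0, the constants e from 1\<close>
    and \<iota>_in: "\<sigma> \<in> G \<Longrightarrow> \<iota> \<sigma> \<in> F"
    and ar_\<iota>: "\<sigma> \<in> G \<Longrightarrow> ar (\<iota> \<sigma>) = ar' \<sigma>"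
    and sg_\<pi>: "\<sigma> \<in> G \<Longrightarrow> length ts = ar' \<sigma> \<Longrightarrow> \<forall>t\<in>set ts. wf_trm F ar t \<Longrightarrow>
        sg \<sigma> (map \<pi> ts) = \<pi> (Fn (\<iota> \<sigma>) ts)"
    and q_\<pi>: "wf_trm F ar t \<Longrightarrow> \<forall>u\<in>set us. wf_trm F ar u \<Longrightarrow>
        q (length us) (\<pi> t) (map \<pi> us) = \<pi> (subst (subst_of us) t)"
begin

abbreviation wf :: "'f trm \<Rightarrow> bool" where "wf \<equiv> wf_trm F ar"

lemma list_onto: "set xs \<subseteq> A \<Longrightarrow> \<exists>us. (\<forall>u\<in>set us. wf u) \<and> xs = map \<pi> us"
proof (induction xs)
  case (Cons x xs)
  then obtain t us where "wf t" "x = \<pi> t" "\<forall>u\<in>set us. wf u" "xs = map \<pi> us"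
    using \<pi>_onto by (metis insert_subset list.simps(15))
  then show ?case by (intro exI[of _ "t # us"]) auto
qed simp

lemma q_map_\<pi>:
  "wf t \<Longrightarrow> \<forall>u\<in>set us. wf u \<Longrightarrow> length us = n \<Longrightarrow> q n (\<pi> t) (map \<pi> us) = \<pi> (subst (subst_of us) t)"
  using q_\<pi> by blast

lemma wf_subst_subst_of: "wf t \<Longrightarrow> \<forall>u\<in>set us. wf u \<Longrightarrow> wf (subst (subst_of us) t)"
  by (simp add: wf_trm_subst wf_trm_subst_of)

lemma e_eq_\<pi>_Var: "1 \<le> i \<Longrightarrow> e i = \<pi> (Var (i - 1))"
  by (simp add: \<pi>_Var)

lemma map_e_upt: "map e [Suc a..<Suc b] = map \<pi> (map Var [a..<b])"
  by (simp only: map_Suc_upt[symmetric] map_map) (simp add: comp_def \<pi>_Var)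

lemma sg_closed: "\<sigma> \<in> G \<Longrightarrow> length xs = ar' \<sigma> \<Longrightarrow> set xs \<subseteq> A \<Longrightarrow> sg \<sigma> xs \<in> A"
  using list_onto[of xs] by (auto simp: sg_\<pi> \<iota>_in ar_\<iota> intro!: \<pi>_in)

lemma q_closed: "x \<in> A \<Longrightarrow> set ys \<subseteq> A \<Longrightarrow> q (length ys) x ys \<in> A"
  using list_onto[of ys] \<pi>_onto[of x] by (auto simp: q_\<pi> intro!: \<pi>_in wf_subst_subst_of)

lemma q_extend:
  assumes "k < n" "x \<in> A" "length ys = k" "set ys \<subseteq> A"
  shows "q k x ys = q n x (ys @ map e [k+1..<n+1])"
proof -
  obtain t where t: "wf t" "x = \<pi> t" using \<pi>_onto assms(2) by blast
  obtain us where us: "\<forall>u\<in>set us. wf u" "ys = map \<pi> us" using list_onto assms(4) by blast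
  have wf_padded: "\<forall>u\<in>set (us @ map Var [k..<n]). wf u" using us by auto
  have "q n x (ys @ map e [k+1..<n+1]) = \<pi> (subst (subst_of (us @ map Var [k..<n])) t)"
    using q_\<pi>[OF t(1) wf_padded] t us assms(1,3) by (simp add: map_e_upt del: upt_Suc)
  then show ?thesis
    using q_\<pi>[OF t(1) us(1)] t us assms(3) by (simp add: subst_of_append_Vars)
qed

lemma q_q:
  assumes "x \<in> A" "length ys = n" "set ys \<subseteq> A" "length zs = n" "set zs \<subseteq> A"
  shows "q n (q n x ys) zs = q n x (map (\<lambda>y. q n y zs) ys)"
proof -
  obtain t where t: "wf t" "x = \<pi> t" using \<pi>_onto assms(1) by blast
  obtain us where us: "\<forall>u\<in>set us. wf u" "ys = map \<pi> us" using list_onto assms(3) by blast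
  obtain ws where ws: "\<forall>u\<in>set ws. wf u" "zs = map \<pi> ws" using list_onto assms(5) by blast
  have lengths: "length us = n" "length ws = n" using us ws assms(2,4) by auto
  let ?vs = "map (subst (subst_of ws)) us"
  have wf_vs: "\<forall>u\<in>set ?vs. wf u" using us ws by (auto simp: wf_subst_subst_of)
  have "q n (q n x ys) zs = \<pi> (subst (subst_of ws) (subst (subst_of us) t))"
    using t us ws lengths by (simp add: q_map_\<pi> wf_subst_subst_of)
  also have "\<dots> = \<pi> (subst (subst_of ?vs) t)"
    using lengths by (simp add: subst_subst_of)
  also have "\<dots> = q n x (map \<pi> ?vs)"
    using q_map_\<pi>[OF t(1) wf_vs] t lengths by simp
  also have "map \<pi> ?vs = map (\<lambda>y. q n y zs) ys"
    using us ws lengths by (simp add: q_map_\<pi>)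
  finally show ?thesis .
qed

lemma q_sg:
  assumes \<sigma>: "\<sigma> \<in> G" "length xs = ar' \<sigma>" and "set xs \<subseteq> A" "length ys = n" "set ys \<subseteq> A"
  shows "q n (sg \<sigma> xs) ys = sg \<sigma> (map (\<lambda>x. q n x ys) xs)"
proof -
  obtain ts where ts: "\<forall>u\<in>set ts. wf u" "xs = map \<pi> ts" using list_onto assms(3) by blast
  obtain us where us: "\<forall>u\<in>set us. wf u" "ys = map \<pi> us" using list_onto assms(5) by blast
  let ?vs = "map (subst (subst_of us)) ts"
  have wf_vs: "\<forall>u\<in>set ?vs. wf u" using us ts by (auto simp: wf_subst_subst_of)
  have wf_Fn: "wf (Fn (\<iota> \<sigma>) ts)" using ts \<sigma> by (simp add: \<iota>_in ar_\<iota>)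
  have "q n (sg \<sigma> xs) ys = \<pi> (Fn (\<iota> \<sigma>) ?vs)"
    using ts us wf_Fn \<sigma> assms(4) by (simp add: sg_\<pi> q_map_\<pi>)
  also have "\<dots> = sg \<sigma> (map \<pi> ?vs)"
    using sg_\<pi>[OF \<sigma>(1) _ wf_vs] ts \<sigma>(2) by simp
  also have "map \<pi> ?vs = map (\<lambda>x. q n x ys) xs"
    using ts us assms(4) by (simp add: q_map_\<pi>)
  finally show ?thesis .
qed

lemma is_clone_algebra: "clone_algebra G ar' A sg q e"
  unfolding clone_algebra_def
proof (intro conjI allI impI)
  fix n x ys assume "x \<in> A" "length ys = n" "set ys \<subseteq> A"
  then show "q n x ys \<in> A" using q_closed by blast
next
  fix i :: nat assume "1 \<le> i"
  then show "e i \<in> A" by (simp add: e_eq_\<pi>_Var \<pi>_in)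
next
  fix n i xs assume "1 \<le> i" "i \<le> n" "length xs = n" "set xs \<subseteq> A"
  then show "q n (e i) xs = xs ! (i - 1)"
    using list_onto[of xs] by (auto simp: e_eq_\<pi>_Var q_\<pi> subst_of_def)
next
  fix n j xs assume "n < j" "length xs = n" "set xs \<subseteq> A"
  then show "q n (e j) xs = e j"
    using list_onto[of xs] by (auto simp: e_eq_\<pi>_Var q_\<pi> subst_of_def)
next
  fix n x assume "x \<in> A"
  then obtain t where "wf t" "x = \<pi> t" using \<pi>_onto by blast
  then show "q n x (map e [1..<n+1]) = x"
    using q_\<pi>[of t "map Var [0..<n]"] by (simp add: map_e_upt del: upt_Suc)
qed (simp_all add: sg_closed q_extend q_q q_sg)

lemma independent_of_unused_var:
  assumes "wf t" "1 \<le> n" "n - 1 \<notin> vars t"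
  shows "independent q e (\<pi> t) n"
proof -
  let ?us = "map Var [0..<n - 1] @ [Var n]"
  have "map e [1..<n] @ [e (n + 1)] = map \<pi> ?us"
    using map_e_upt[of 0 "n - 1"] \<open>1 \<le> n\<close> by (simp add: \<pi>_Var)
  moreover have "subst (subst_of ?us) t = t"
  proof (rule trans[OF subst_cong subst_Var])
    fix i assume "i \<in> vars t"
    then have "i \<noteq> n - 1" using assms(3) by blast
    then show "subst_of ?us i = Var i"
      by (cases "i < n - 1") (auto simp: subst_of_def nth_append)
  qed
  ultimately show ?thesis
    using q_map_\<pi>[OF \<open>wf t\<close>, of ?us n] \<open>1 \<le> n\<close> by (simp add: independent_def)
qed

lemma is_finite_dimensional: "finite_dimensional A q e"
  unfolding finite_dimensional_def
proof
  fix a assume "a \<in> A"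
  then obtain t where "wf t" "a = \<pi> t" using \<pi>_onto by blast
  then have "{n. 1 \<le> n \<and> \<not> independent q e a n} \<subseteq> Suc ` vars t"
    using independent_of_unused_var by (force simp: image_iff)
  then show "finite {n. 1 \<le> n \<and> \<not> independent q e a n}"
    using finite_vars finite_subset by blast
qed

definition preimage_rel :: "('c \<times> 'c) set \<Rightarrow> ('f trm \<times> 'f trm) set" where
  "preimage_rel R = {(t, u). wf t \<and> wf u \<and> (\<pi> t, \<pi> u) \<in> R}"

definition image_rel :: "('f trm \<times> 'f trm) set \<Rightarrow> ('c \<times> 'c) set" where
  "image_rel E = {(\<pi> t, \<pi> u) | t u. (t, u) \<in> E}"

definition kernel :: "('f trm \<times> 'f trm) set" where
  "kernel = {(t, u). wf t \<and> wf u \<and> \<pi> t = \<pi> u}"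

text \<open>Every symbol f acts on A through q and the element represented by f(x_0, ..., x_{n-1}), so
  congruences of A respect f even when f is not among the basic operations of A.\<close>

lemma \<pi>_Fn_eq_q:
  assumes "f \<in> F" "length ts = ar f" "\<forall>t\<in>set ts. wf t"
  shows "\<pi> (Fn f ts) = q (ar f) (\<pi> (Fn f (map Var [0..<ar f]))) (map \<pi> ts)"
proof -
  have wf_Fn: "wf (Fn f (map Var [0..<ar f]))" using assms(1) by simp
  have "q (ar f) (\<pi> (Fn f (map Var [0..<ar f]))) (map \<pi> ts)
      = \<pi> (subst (subst_of ts) (Fn f (map Var [0..<ar f])))"
    using q_map_\<pi>[OF wf_Fn assms(3,2)] .
  also have "subst (subst_of ts) (Fn f (map Var [0..<ar f])) = Fn f ts"
    using map_subst_of_upt[of ts] assms(2) by (simp add: comp_def)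
  finally show ?thesis by simp
qed

lemma preimage_rel_Fn:
  assumes R: "clone_congruence G ar' A sg q R" and f: "f \<in> F" "length ts = ar f" "length us = ar f"
    and args: "list_all2 (\<lambda>t u. (t, u) \<in> preimage_rel R) ts us"
  shows "(Fn f ts, Fn f us) \<in> preimage_rel R"
proof -
  have wf_args: "\<forall>t\<in>set ts. wf t" "\<forall>u\<in>set us. wf u"
    using list_all2_set_Domain_Range[OF args] by (auto simp: preimage_rel_def)
  have args_R: "list_all2 (\<lambda>x y. (x, y) \<in> R) (map \<pi> ts) (map \<pi> us)"
    using args by (auto simp: preimage_rel_def list_all2_conv_all_nth)
  have "(\<pi> (Fn f (map Var [0..<ar f])), \<pi> (Fn f (map Var [0..<ar f]))) \<in> R"
    using clone_congruence_eq_\<pi>_Varuiv[OF R] \<pi>_in f(1) by (simp add: equiv_def refl_on_def)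
  then have "(\<pi> (Fn f ts), \<pi> (Fn f us)) \<in> R"
    using clone_congruence_q[OF R _ args_R] f wf_args \<pi>_Fn_eq_q[of f ts] \<pi>_Fn_eq_q[of f us] by simp
  with f wf_args show ?thesis by (simp add: preimage_rel_def)
qed

lemma preimage_rel_subst:
  assumes R: "clone_congruence G ar' A sg q R" and s: "\<forall>i. wf (s i)" and "(t, u) \<in> preimage_rel R"
  shows "(subst s t, subst s u) \<in> preimage_rel R"
proof -
  have wf_tu: "wf t" "wf u" and tu: "(\<pi> t, \<pi> u) \<in> R"
    using assms(3) by (auto simp: preimage_rel_def)
  obtain N where N: "\<forall>i\<in>vars t \<union> vars u. i < N"
    using finite_vars finite_nat_set_iff_bounded by (metis finite_UnI)
  let ?us = "map s [0..<N]"
  have "list_all2 (\<lambda>y y'. (y, y') \<in> R) (map \<pi> ?us) (map \<pi> ?us)"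
    using clone_congruence_eq_\<pi>_Varuiv[OF R] \<pi>_in s by (simp add: list_all2_same equiv_def refl_on_def)
  then have "(q N (\<pi> t) (map \<pi> ?us), q N (\<pi> u) (map \<pi> ?us)) \<in> R"
    using clone_congruence_q[OF R tu] by (metis length_map length_upt minus_nat.diff_0)
  moreover have "subst s t = subst (subst_of ?us) t" "subst s u = subst (subst_of ?us) u"
    using N by (simp_all add: subst_eq_subst_of)
  ultimately show ?thesis
    using wf_tu s q_map_\<pi>[OF wf_tu(1), of ?us N] q_map_\<pi>[OF wf_tu(2), of ?us N]
    by (simp add: preimage_rel_def wf_subst_subst_of)
qed

lemma eq_theory_preimage_rel:
  assumes R: "clone_congruence G ar' A sg q R"
  shows "eq_theory F ar (preimage_rel R)"
  unfolding eq_theory_def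
proof (intro conjI allI impI)
  show "preimage_rel R \<subseteq> {(t, u). wf t \<and> wf u}" by (auto simp: preimage_rel_def)
next
  fix t assume "wf t" then show "(t, t) \<in> preimage_rel R"
    using clone_congruence_eq_\<pi>_Varuiv[OF R] \<pi>_in by (simp add: preimage_rel_def equiv_def refl_on_def)
next
  fix t u assume "(t, u) \<in> preimage_rel R" then show "(u, t) \<in> preimage_rel R"
    using clone_congruence_eq_\<pi>_Varuiv[OF R] by (auto simp: preimage_rel_def equiv_def dest: symD)
next
  fix t u v assume "(t, u) \<in> preimage_rel R" "(u, v) \<in> preimage_rel R"
  then show "(t, v) \<in> preimage_rel R"
    using clone_congruence_eq_\<pi>_Varuiv[OF R] by (auto simp: preimage_rel_def equiv_def dest: transD)
qed (use preimage_rel_Fn[OF R] preimage_rel_subst[OF R] in auto)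

lemma clone_congruence_Id_on: "clone_congruence G ar' A sg q (Id_on A)"
  unfolding clone_congruence_def
proof (intro conjI allI impI)
  show "equiv A (Id_on A)" by (rule equivI) (auto simp: refl_on_def sym_def trans_def)
next
  fix \<sigma> xs ys assume "\<sigma> \<in> G" "length xs = ar' \<sigma>" "list_all2 (\<lambda>x y. (x, y) \<in> Id_on A) xs ys"
  then show "(sg \<sigma> xs, sg \<sigma> ys) \<in> Id_on A" using sg_closed by (auto simp: list_all2_Id_on)
next
  fix n x x' ys ys' assume "(x, x') \<in> Id_on A" "length ys = n" "list_all2 (\<lambda>y y'. (y, y') \<in> Id_on A) ys ys'"
  then show "(q n x ys, q n x' ys') \<in> Id_on A" using q_closed by (auto simp: list_all2_Id_on)
qed

lemma kernel_eq_preimage_rel: "kernel = preimage_rel (Id_on A)"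
  by (auto simp: kernel_def preimage_rel_def \<pi>_in)

lemma eq_theory_kernel: "eq_theory F ar kernel"
  unfolding kernel_eq_preimage_rel by (rule eq_theory_preimage_rel[OF clone_congruence_Id_on])

lemma preimage_rel_mem_eq_theory_lattice:
  assumes "clone_congruence G ar' A sg q R"
  shows "preimage_rel R \<in> eq_theory_lattice F ar kernel"
proof -
  have "(\<pi> t, \<pi> t) \<in> R" if "wf t" for t
    using clone_congruence_eq_\<pi>_Varuiv[OF assms] \<pi>_in[OF that] by (simp add: equiv_def refl_on_def)
  then have "kernel \<subseteq> preimage_rel R" by (auto simp: kernel_def preimage_rel_def)
  with eq_theory_preimage_rel[OF assms] show ?thesis by (simp add: eq_theory_lattice_def)
qed

lemma list_all2_image_rel:
  "list_all2 (\<lambda>x y. (x, y) \<in> image_rel E) xs ys \<Longrightarrow>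
    \<exists>ts us. xs = map \<pi> ts \<and> ys = map \<pi> us \<and> list_all2 (\<lambda>t u. (t, u) \<in> E) ts us"
proof (induction rule: list_all2_induct)
  case (Cons x xs y ys)
  then obtain ts us where "xs = map \<pi> ts" "ys = map \<pi> us" "list_all2 (\<lambda>t u. (t, u) \<in> E) ts us"
    by blast
  moreover obtain t u where "x = \<pi> t" "y = \<pi> u" "(t, u) \<in> E"
    using Cons(1) by (auto simp: image_rel_def)
  ultimately show ?case by (intro exI[of _ "t # ts"] exI[of _ "u # us"]) auto
qed simp

lemma equiv_image_rel:
  assumes "E \<in> eq_theory_lattice F ar kernel"
  shows "equiv A (image_rel E)"
proof (rule equivI)
  have E: "eq_theory F ar E" and kernel_E: "kernel \<subseteq> E"
    using assms by (auto simp: eq_theory_lattice_def)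
  show "image_rel E \<subseteq> A \<times> A"
    using \<pi>_in by (auto simp: image_rel_def dest: eq_theory_wf[OF E])
  show "refl_on A (image_rel E)"
    unfolding refl_on_def image_rel_def using \<pi>_onto eq_theory_refl[OF E] by blast
  show "sym (image_rel E)"
    unfolding sym_def image_rel_def using eq_theory_sym[OF E] by blast
  show "trans (image_rel E)"
  proof (rule transI)
    fix x y z assume "(x, y) \<in> image_rel E" "(y, z) \<in> image_rel E"
    then obtain t u u' v where tuv: "x = \<pi> t" "(t, u) \<in> E" "\<pi> u = \<pi> u'" "(u', v) \<in> E" "z = \<pi> v"
      unfolding image_rel_def by blast
    then have "(u, u') \<in> E"
      using kernel_E by (auto simp: kernel_def dest: eq_theory_wf[OF E])
    with tuv have "(t, v) \<in> E"
      by (blast intro: eq_theory_trans[OF E])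
    with tuv show "(x, z) \<in> image_rel E"
      by (auto simp: image_rel_def)
  qed
qed

lemma image_rel_sg:
  assumes E: "eq_theory F ar E" and \<sigma>: "\<sigma> \<in> G" "length xs = ar' \<sigma>"
    and args: "list_all2 (\<lambda>x y. (x, y) \<in> image_rel E) xs ys"
  shows "(sg \<sigma> xs, sg \<sigma> ys) \<in> image_rel E"
proof -
  obtain ts us where tsus: "xs = map \<pi> ts" "ys = map \<pi> us" "list_all2 (\<lambda>t u. (t, u) \<in> E) ts us"
    using list_all2_image_rel[OF args] by blast
  have lengths: "length ts = ar' \<sigma>" "length us = ar' \<sigma>"
    using tsus \<sigma> list_all2_lengthD by fastforce+
  have wf_args: "\<forall>t\<in>set ts. wf t" "\<forall>u\<in>set us. wf u"
    using list_all2_set_Domain_Range[OF tsus(3)] eq_theory_wf[OF E] by blast+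
  have "(Fn (\<iota> \<sigma>) ts, Fn (\<iota> \<sigma>) us) \<in> E"
    using eq_theory_Fn[OF E] \<sigma> lengths tsus(3) by (simp add: \<iota>_in ar_\<iota>)
  then show ?thesis
    using tsus sg_\<pi>[OF \<sigma>(1) lengths(1) wf_args(1)] sg_\<pi>[OF \<sigma>(1) lengths(2) wf_args(2)]
    by (auto simp: image_rel_def)
qed

lemma image_rel_q:
  assumes E: "eq_theory F ar E" and x: "(x, x') \<in> image_rel E"
    and args: "list_all2 (\<lambda>y y'. (y, y') \<in> image_rel E) ys ys'"
  shows "(q (length ys) x ys, q (length ys) x' ys') \<in> image_rel E"
proof -
  obtain us us' where usus: "ys = map \<pi> us" "ys' = map \<pi> us'" "list_all2 (\<lambda>t u. (t, u) \<in> E) us us'"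
    using list_all2_image_rel[OF args] by blast
  obtain t t' where tt: "x = \<pi> t" "x' = \<pi> t'" "(t, t') \<in> E"
    using x by (auto simp: image_rel_def)
  have lengths: "length us = length ys" "length us' = length ys"
    using usus list_all2_lengthD by fastforce+
  have wf_args: "\<forall>u\<in>set us. wf u" "\<forall>u\<in>set us'. wf u"
    using list_all2_set_Domain_Range[OF usus(3)] eq_theory_wf[OF E] by blast+
  have "\<forall>i. (subst_of us i, subst_of us' i) \<in> E"
    using usus(3) eq_theory_refl[OF E] by (auto simp: subst_of_def list_all2_conv_all_nth)
  then have "(subst (subst_of us) t, subst (subst_of us') t') \<in> E"
    using eq_theory_subst_compat[OF E tt(3)] by blast
  then show ?thesis
    using tt usus q_map_\<pi>[OF _ wf_args(1) lengths(1)] q_map_\<pi>[OF _ wf_args(2) lengths(2)]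
      eq_theory_wf[OF E tt(3)] by (auto simp: image_rel_def)
qed

lemma clone_congruence_image_rel:
  assumes "E \<in> eq_theory_lattice F ar kernel"
  shows "clone_congruence G ar' A sg q (image_rel E)"
  using equiv_image_rel[OF assms] image_rel_sg image_rel_q assms
  unfolding clone_congruence_def eq_theory_lattice_def by blast

lemma preimage_image_rel:
  assumes "E \<in> eq_theory_lattice F ar kernel"
  shows "preimage_rel (image_rel E) = E"
proof
  have E: "eq_theory F ar E" and kernel_E: "kernel \<subseteq> E"
    using assms by (auto simp: eq_theory_lattice_def)
  show "E \<subseteq> preimage_rel (image_rel E)"
    using eq_theory_wf[OF E] by (auto simp: preimage_rel_def image_rel_def)
  show "preimage_rel (image_rel E) \<subseteq> E"
  proof clarify
    fix t u assume "(t, u) \<in> preimage_rel (image_rel E)"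
    then obtain t' u' where tu: "wf t" "wf u" "\<pi> t = \<pi> t'" "\<pi> u = \<pi> u'" "(t', u') \<in> E"
      by (auto simp: preimage_rel_def image_rel_def)
    then have "(t, t') \<in> E" "(u', u) \<in> E"
      using kernel_E eq_theory_wf[OF E tu(5)] by (auto simp: kernel_def)
    with tu(5) show "(t, u) \<in> E" by (blast intro: eq_theory_trans[OF E])
  qed
qed

lemma image_preimage_rel:
  assumes "clone_congruence G ar' A sg q R"
  shows "image_rel (preimage_rel R) = R"
proof
  show "image_rel (preimage_rel R) \<subseteq> R" by (auto simp: preimage_rel_def image_rel_def)
  show "R \<subseteq> image_rel (preimage_rel R)"
  proof clarify
    fix x y assume "(x, y) \<in> R"
    moreover from this have "x \<in> A" "y \<in> A"
      using clone_congruence_eq_\<pi>_Varuiv[OF assms] by (auto simp: equiv_def refl_on_def)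
    then obtain t u where "wf t" "x = \<pi> t" "wf u" "y = \<pi> u" using \<pi>_onto by metis
    ultimately show "(x, y) \<in> image_rel (preimage_rel R)"
      by (auto simp: preimage_rel_def image_rel_def)
  qed
qed

theorem iso_congruence_lattice_iff_eq_theory_lattice:
  "iso_to_set_lattice TYPE('a::lattice) (congruence_lattice G ar' A sg q)
    \<longleftrightarrow> iso_to_set_lattice TYPE('a) (eq_theory_lattice F ar kernel)"
proof -
  have maps: "preimage_rel ` congruence_lattice G ar' A sg q \<subseteq> eq_theory_lattice F ar kernel"
      "image_rel ` eq_theory_lattice F ar kernel \<subseteq> congruence_lattice G ar' A sg q"
    by (auto simp: congruence_lattice_def preimage_rel_mem_eq_theory_lattice clone_congruence_image_rel)
  have inverse: "\<And>R. R \<in> congruence_lattice G ar' A sg q \<Longrightarrow> image_rel (preimage_rel R) = R"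
      "\<And>E. E \<in> eq_theory_lattice F ar kernel \<Longrightarrow> preimage_rel (image_rel E) = E"
    by (auto simp: congruence_lattice_def image_preimage_rel preimage_image_rel)
  have mono: "mono preimage_rel" "mono image_rel"
    by (auto simp: mono_def preimage_rel_def image_rel_def)
  show ?thesis
    using iso_to_set_lattice_transfer[OF _ maps inverse mono]
      iso_to_set_lattice_transfer[OF _ maps(2,1) inverse(2,1) mono(2,1)] by blast
qed

end

definition quotient_sg :: "('f trm \<times> 'f trm) set \<Rightarrow> 'f \<Rightarrow> 'f trm set list \<Rightarrow> 'f trm set" where
  "quotient_sg T f Xs = T `` {Fn f (map some_elem Xs)}"

definition quotient_q :: "('f trm \<times> 'f trm) set \<Rightarrow> nat \<Rightarrow> 'f trm set \<Rightarrow> 'f trm set list \<Rightarrow> 'f trm set" where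
  "quotient_q T n X Ys = T `` {subst (subst_of (map some_elem Ys)) (some_elem X)}"

definition quotient_e :: "('f trm \<times> 'f trm) set \<Rightarrow> nat \<Rightarrow> 'f trm set" where
  "quotient_e T i = T `` {Var (i - 1)}"

context
  fixes F :: "'f set" and ar :: "'f \<Rightarrow> nat" and T :: "('f trm \<times> 'f trm) set"
  assumes T: "eq_theory F ar T"
begin

lemma some_elem_class: "wf_trm F ar t \<Longrightarrow> (some_elem (T `` {t}), t) \<in> T"
  using equiv_class_self[OF eq_theory_equiv[OF T]] some_elem_nonempty[of "T `` {t}"]
  by (auto intro: eq_theory_sym[OF T])

lemma term_presentation_quotient:
  "term_presentation F ar F ar id ({t. wf_trm F ar t} // T) (quotient_sg T) (quotient_q T) (quotient_e T)
     (\<lambda>t. T `` {t})"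
proof
  show "T `` {t} \<in> {t. wf_trm F ar t} // T" if "wf_trm F ar t" for t
    using that by (simp add: quotientI)
  show "\<exists>t. wf_trm F ar t \<and> T `` {t} = X" if "X \<in> {t. wf_trm F ar t} // T" for X
    using that by (auto elim: quotientE)
  show "T `` {Var i} = quotient_e T (Suc i)" for i
    by (simp add: quotient_e_def)
  show "quotient_sg T f (map (\<lambda>t. T `` {t}) ts) = T `` {Fn (id f) ts}"
    if "f \<in> F" "length ts = ar f" "\<forall>t\<in>set ts. wf_trm F ar t" for f ts
  proof -
    have "list_all2 (\<lambda>t u. (t, u) \<in> T) (map (\<lambda>t. some_elem (T `` {t})) ts) ts"
      using that(3) some_elem_class by (auto simp: list_all2_conv_all_nth)
    then have "(Fn f (map (\<lambda>t. some_elem (T `` {t})) ts), Fn f ts) \<in> T"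
      using eq_theory_Fn[OF T] that by simp
    then show ?thesis
      by (simp add: quotient_sg_def comp_def equiv_class_eq[OF eq_theory_equiv[OF T]])
  qed
  show "quotient_q T (length us) (T `` {t}) (map (\<lambda>t. T `` {t}) us) = T `` {subst (subst_of us) t}"
    if "wf_trm F ar t" "\<forall>u\<in>set us. wf_trm F ar u" for t us
  proof -
    have "\<forall>i. (subst_of (map (\<lambda>t. some_elem (T `` {t})) us) i, subst_of us i) \<in> T"
      using that(2) some_elem_class eq_theory_refl[OF T] by (auto simp: subst_of_def)
    then have "(subst (subst_of (map (\<lambda>t. some_elem (T `` {t})) us)) (some_elem (T `` {t})),
        subst (subst_of us) t) \<in> T"
      using eq_theory_subst_compat[OF T some_elem_class[OF that(1)]] by blast
    then show ?thesis
      by (simp add: quotient_q_def comp_def equiv_class_eq[OF eq_theory_equiv[OF T]])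
  qed
qed simp_all

lemma kernel_quotient: "term_presentation.kernel F ar (\<lambda>t. T `` {t}) = T"
  using eq_equiv_class_iff[OF eq_theory_equiv[OF T]] eq_theory_wf[OF T]
  by (auto simp: term_presentation.kernel_def[OF term_presentation_quotient])

theorem quotient_clone_algebra_congruence_lattice_iso:
  "clone_algebra F ar ({t. wf_trm F ar t} // T) (quotient_sg T) (quotient_q T) (quotient_e T)
   \<and> finite_dimensional ({t. wf_trm F ar t} // T) (quotient_q T) (quotient_e T)
   \<and> (iso_to_set_lattice TYPE('a::lattice)
        (congruence_lattice F ar ({t. wf_trm F ar t} // T) (quotient_sg T) (quotient_q T))
      \<longleftrightarrow> iso_to_set_lattice TYPE('a) (eq_theory_lattice F ar T))"
  using term_presentation.is_clone_algebra[OF term_presentation_quotient]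
    term_presentation.is_finite_dimensional[OF term_presentation_quotient]
    term_presentation.iso_congruence_lattice_iff_eq_theory_lattice[OF term_presentation_quotient, where 'a = 'a]
  by (simp add: kernel_quotient)

end

locale clone_alg =
  fixes G :: "'g set" and ar :: "'g \<Rightarrow> nat" and A :: "'c set" and sg :: "'g \<Rightarrow> 'c list \<Rightarrow> 'c"
    and q :: "nat \<Rightarrow> 'c \<Rightarrow> 'c list \<Rightarrow> 'c" and e :: "nat \<Rightarrow> 'c"
  assumes clone_algebra: "clone_algebra G ar A sg q e"
begin

lemma
  shows sg_closed: "\<sigma> \<in> G \<Longrightarrow> length xs = ar \<sigma> \<Longrightarrow> set xs \<subseteq> A \<Longrightarrow> sg \<sigma> xs \<in> A"
    and q_closed: "x \<in> A \<Longrightarrow> length ys = n \<Longrightarrow> set ys \<subseteq> A \<Longrightarrow> q n x ys \<in> A"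
    and e_closed: "1 \<le> i \<Longrightarrow> e i \<in> A"
    and q_e_proj: "1 \<le> i \<Longrightarrow> i \<le> n \<Longrightarrow> length xs = n \<Longrightarrow> set xs \<subseteq> A \<Longrightarrow> q n (e i) xs = xs ! (i - 1)"
    and q_e_beyond: "n < j \<Longrightarrow> length xs = n \<Longrightarrow> set xs \<subseteq> A \<Longrightarrow> q n (e j) xs = e j"
    and q_unit: "x \<in> A \<Longrightarrow> q n x (map e [1..<n+1]) = x"
    and q_extend: "k < n \<Longrightarrow> x \<in> A \<Longrightarrow> length ys = k \<Longrightarrow> set ys \<subseteq> A \<Longrightarrow>
        q k x ys = q n x (ys @ map e [k+1..<n+1])"
    and q_q: "x \<in> A \<Longrightarrow> length ys = n \<Longrightarrow> set ys \<subseteq> A \<Longrightarrow> length zs = n \<Longrightarrow> set zs \<subseteq> A \<Longrightarrow>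
        q n (q n x ys) zs = q n x (map (\<lambda>y. q n y zs) ys)"
    and q_sg: "\<sigma> \<in> G \<Longrightarrow> length xs = ar \<sigma> \<Longrightarrow> set xs \<subseteq> A \<Longrightarrow> length ys = n \<Longrightarrow> set ys \<subseteq> A \<Longrightarrow>
        q n (sg \<sigma> xs) ys = sg \<sigma> (map (\<lambda>x. q n x ys) xs)"
  using clone_algebra unfolding clone_algebra_def by (elim conjE; metis)+

lemma q_extend_le:
  "k \<le> n \<Longrightarrow> x \<in> A \<Longrightarrow> length ys = k \<Longrightarrow> set ys \<subseteq> A \<Longrightarrow> q k x ys = q n x (ys @ map e [k+1..<n+1])"
  using q_extend[of k n x ys] by (cases "k = n") simp_all

lemma q_independent_last:
  assumes c: "c \<in> A" and indep: "independent q e c (Suc m)"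
    and xs: "length xs = m" "set xs \<subseteq> A" and y: "y \<in> A"
  shows "q (Suc m) c (xs @ [y]) = q (Suc m) c (xs @ [e (Suc (Suc m))])"
proof -
  \<comment> \<open>substitute xs @ [y] into the identity q(c, e_1, ..., e_m, e_{m+2}) = c\<close>
  let ?ids = "map e [1..<Suc m] @ [e (Suc (Suc m))]" and ?zs = "xs @ [y]"
  have ids: "length ?ids = Suc m" "set ?ids \<subseteq> A" and zs: "length ?zs = Suc m" "set ?zs \<subseteq> A"
    using xs y e_closed by auto
  have "map (\<lambda>z. q (Suc m) z ?zs) ?ids = xs @ [e (Suc (Suc m))]"
  proof (rule nth_equalityI)
    fix i assume "i < length (map (\<lambda>z. q (Suc m) z ?zs) ?ids)"
    then consider "i < m" | "i = m" using ids by fastforce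
    then show "map (\<lambda>z. q (Suc m) z ?zs) ?ids ! i = (xs @ [e (Suc (Suc m))]) ! i"
      by cases (use xs zs in \<open>simp_all add: nth_append q_e_proj q_e_beyond del: upt_Suc\<close>)
  qed (use xs in simp)
  then have "q (Suc m) (q (Suc m) c ?ids) ?zs = q (Suc m) c (xs @ [e (Suc (Suc m))])"
    using q_q[OF c ids zs] by simp
  moreover have "q (Suc m) c ?ids = c"
    using indep by (simp add: independent_def)
  ultimately show ?thesis by simp
qed

lemma q_drop_independent_last:
  assumes c: "c \<in> A" and indep: "independent q e c (Suc m)"
    and xs: "length xs = m" "set xs \<subseteq> A" and y: "y \<in> A"
  shows "q (Suc m) c (xs @ [y]) = q m c xs"
proof -
  have "q (Suc m) c (xs @ [y]) = q (Suc m) c (xs @ [e (Suc m)])"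
    using q_independent_last[OF assms] q_independent_last[OF c indep xs e_closed, of "Suc m"] by simp
  also have "\<dots> = q m c xs"
    using q_extend[OF _ c xs, of "Suc m"] by simp
  finally show ?thesis .
qed

lemma q_independent_above:
  assumes c: "c \<in> A" and indep: "\<forall>n>k. independent q e c n"
  shows "k \<le> m \<Longrightarrow> length zs = m \<Longrightarrow> set zs \<subseteq> A \<Longrightarrow> q m c zs = q k c (take k zs)"
proof (induction m arbitrary: zs rule: dec_induct)
  case base
  then show ?case by simp
next
  case (step m)
  then obtain xs y where zs: "zs = xs @ [y]"
    by (metis length_Suc_conv_rev)
  with step.prems have xs: "length xs = m" "set xs \<subseteq> A" and "y \<in> A" by auto
  then have "q (Suc m) c zs = q m c xs"
    using q_drop_independent_last[OF c] indep step.hyps zs by simp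
  also have "\<dots> = q k c (take k zs)"
    using step.IH[OF xs] step.hyps zs xs by simp
  finally show ?case .
qed

lemma q_q_independent:
  assumes c: "c \<in> A" and indep: "\<forall>n>k. independent q e c n"
    and xs: "length xs = k" "set xs \<subseteq> A" and ys: "length ys = n" "set ys \<subseteq> A"
  shows "q n (q k c xs) ys = q k c (map (\<lambda>x. q n x ys) xs)"
proof -
  define m where "m = k + n"
  define xs' where "xs' = xs @ map e [k+1..<m+1]"
  define ys' where "ys' = ys @ map e [n+1..<m+1]"
  have xs': "length xs' = m" "set xs' \<subseteq> A" and ys': "length ys' = m" "set ys' \<subseteq> A"
    using xs ys e_closed by (auto simp: xs'_def ys'_def m_def)
  have pad_ys: "q n x ys = q m x ys'" if "x \<in> A" for x
    unfolding ys'_def by (rule q_extend_le) (use that ys in \<open>simp_all add: m_def\<close>)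
  have "q n (q k c xs) ys = q m (q m c xs') ys'"
    using q_extend_le[OF _ c xs, of m] pad_ys[OF q_closed[OF c xs]] by (simp add: xs'_def m_def)
  also have "\<dots> = q m c (map (\<lambda>z. q m z ys') xs')"
    by (rule q_q[OF c xs' ys'])
  also have "\<dots> = q k c (take k (map (\<lambda>z. q m z ys') xs'))"
  proof (rule q_independent_above[OF c indep])
    show "set (map (\<lambda>z. q m z ys') xs') \<subseteq> A"
      using xs' ys' q_closed by auto
  qed (simp_all add: xs' m_def)
  also have "take k (map (\<lambda>z. q m z ys') xs') = map (\<lambda>x. q n x ys) xs"
    using xs pad_ys by (auto simp: xs'_def subset_iff)
  finally show ?thesis .
qed

definition dim :: "'c \<Rightarrow> nat" where
  "dim c = (LEAST k. \<forall>n>k. independent q e c n)" \<comment> \<open>junk if c depends on infinitely many e_n\<close>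

lemma independent_above_dim:
  assumes "finite_dimensional A q e" "c \<in> A" "dim c < n"
  shows "independent q e c n"
proof -
  have "finite {n. 1 \<le> n \<and> \<not> independent q e c n}"
    using assms(1,2) unfolding finite_dimensional_def by blast
  then obtain k where bound: "\<forall>n\<in>{n. 1 \<le> n \<and> \<not> independent q e c n}. n \<le> k"
    unfolding finite_nat_set_iff_bounded_le by blast
  have "\<forall>n>k. independent q e c n"
  proof (intro allI impI, rule ccontr)
    fix n assume "k < n" "\<not> independent q e c n"
    then have "n \<in> {n. 1 \<le> n \<and> \<not> independent q e c n}" by simp
    then have "n \<le> k" using bound by blast
    with \<open>k < n\<close> show False by simp
  qed
  then have "\<forall>n>dim c. independent q e c n"
    unfolding dim_def by (rule LeastI)
  with assms(3) show ?thesis by blast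
qed

fun eval_trm :: "('g + 'c) trm \<Rightarrow> 'c" where
  "eval_trm (Var i) = e (Suc i)"
| "eval_trm (Fn (Inl \<sigma>) ts) = sg \<sigma> (map eval_trm ts)"
| "eval_trm (Fn (Inr c) ts) = q (length ts) c (map eval_trm ts)"

text \<open>The symbol Inl \<sigma> denotes the basic operation \<sigma>, and Inr c, of arity dim c, denotes
  q_{dim c}(c, -).\<close>

abbreviation wf :: "('g + 'c) trm \<Rightarrow> bool" where
  "wf \<equiv> wf_trm (Inl ` G \<union> Inr ` A) (case_sum ar dim)"

lemma eval_trm_in: "wf t \<Longrightarrow> eval_trm t \<in> A"
proof (induction t rule: eval_trm.induct)
  case (2 \<sigma> ts)
  then show ?case by (auto intro!: sg_closed)
next
  case (3 c ts)
  then show ?case by (auto intro!: q_closed)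
qed (simp add: e_closed)

lemma q_eval_trm:
  assumes fd: "finite_dimensional A q e"
  shows "wf t \<Longrightarrow> \<forall>u\<in>set us. wf u \<Longrightarrow>
    q (length us) (eval_trm t) (map eval_trm us) = eval_trm (subst (subst_of us) t)"
proof (induction t rule: eval_trm.induct)
  case (1 i)
  then have "set (map eval_trm us) \<subseteq> A" using eval_trm_in by auto
  then show ?case
    using q_e_proj[of "Suc i" "length us" "map eval_trm us"] q_e_beyond[of "length us" "Suc i" "map eval_trm us"]
    by (cases "i < length us") (auto simp: subst_of_def)
next
  case (2 \<sigma> ts)
  then have "q (length us) (sg \<sigma> (map eval_trm ts)) (map eval_trm us)
      = sg \<sigma> (map (\<lambda>x. q (length us) x (map eval_trm us)) (map eval_trm ts))"
    using eval_trm_in by (intro q_sg) auto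
  with 2 show ?case by (simp add: comp_def cong: map_cong)
next
  case (3 c ts)
  then have "q (length us) (q (length ts) c (map eval_trm ts)) (map eval_trm us)
      = q (length ts) c (map (\<lambda>x. q (length us) x (map eval_trm us)) (map eval_trm ts))"
    using eval_trm_in independent_above_dim[OF fd] by (intro q_q_independent) auto
  with 3 show ?case by (simp add: comp_def cong: map_cong)
qed

lemma term_presentation_eval_trm:
  assumes "finite_dimensional A q e"
  shows "term_presentation (Inl ` G \<union> Inr ` A) (case_sum ar dim) G ar Inl A sg q e eval_trm"
proof
  fix c assume "c \<in> A"
  moreover have "map (\<lambda>i. e (Suc i)) [0..<dim c] = map e [Suc 0..<Suc (dim c)]"
    by (simp only: map_Suc_upt[symmetric] map_map comp_def)
  ultimately have "eval_trm (Fn (Inr c) (map Var [0..<dim c])) = c"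
    using q_unit[of c "dim c"] by (simp add: comp_def del: upt_Suc)
  moreover have "wf (Fn (Inr c) (map Var [0..<dim c]))"
    using \<open>c \<in> A\<close> by simp
  ultimately show "\<exists>t. wf t \<and> eval_trm t = c" by blast
qed (auto simp: eval_trm_in q_eval_trm[OF assms])

theorem eval_kernel_congruence_lattice_iso:
  assumes "finite_dimensional A q e"
  defines "K \<equiv> term_presentation.kernel (Inl ` G \<union> Inr ` A) (case_sum ar dim) eval_trm"
  shows "eq_theory (Inl ` G \<union> Inr ` A) (case_sum ar dim) K
    \<and> (iso_to_set_lattice TYPE('a::lattice) (congruence_lattice G ar A sg q)
        \<longleftrightarrow> iso_to_set_lattice TYPE('a) (eq_theory_lattice (Inl ` G \<union> Inr ` A) (case_sum ar dim) K))"
  unfolding K_def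
  using term_presentation.eq_theory_kernel[OF term_presentation_eval_trm[OF assms(1)]]
    term_presentation.iso_congruence_lattice_iff_eq_theory_lattice[OF term_presentation_eval_trm[OF assms(1)]]
  by blast

end

theorem theorem10p6:
  shows "((\<exists>(F :: 'f set) ar T. eq_theory F ar T \<and>
              iso_to_set_lattice TYPE('a::lattice) (eq_theory_lattice F ar T))
          \<longrightarrow> (\<exists>(G :: 'f set) ar' (A :: 'f trm set set) sg q e.
                 clone_algebra G ar' A sg q e \<and> finite_dimensional A q e \<and>
                 iso_to_set_lattice TYPE('a) (congruence_lattice G ar' A sg q)))
       \<and> ((\<exists>(G :: 'g set) ar (A :: 'c set) sg q e.
                 clone_algebra G ar A sg q e \<and> finite_dimensional A q e \<and>
                 iso_to_set_lattice TYPE('a) (congruence_lattice G ar A sg q))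
          \<longrightarrow> (\<exists>(F :: ('g + 'c) set) ar' T. eq_theory F ar' T \<and>
                 iso_to_set_lattice TYPE('a) (eq_theory_lattice F ar' T)))"
  using quotient_clone_algebra_congruence_lattice_iso
    clone_alg.eval_kernel_congruence_lattice_iso[OF clone_alg.intro]
  by blast

end
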